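(* The $\mathbb{R}$-linear map $$\Theta:\mathbb{R}\otimes_{\mathbb{Z}}\mathcal{H}(\mathcal{Z}_{\mathbb{R}_+})\to\mathbb{R},\quad \begin{bmatrix} s_1,\dots,s_k\\ b_1,\dots,b_k\end{bmatrix}\mapsto f\begin{pmatrix} s_1,\dots,s_k\\ b_1,\dots,b_k\end{pmatrix},\quad 1\mapsto1,$$ is a homomorphism of $\mathbb{R}$-algebras, where the source carries the ($\mathbb{R}$-linear extension of the) product $\diamond$.
   Context: $f\begin{pmatrix} s_1,\dots,s_k\\ b_1,\dots,b_k\end{pmatrix}=\frac{1}{(b_1+\cdots+b_k)^{s_1}(b_2+\cdots+b_k)^{s_2}\cdots b_k^{s_k}}$ for positive integers $s_i$ and positive reals $b_i$. Let $\mathcal{Z}_{\mathbb{R}_+}=\{\begin{bmatrix} r\\ b\end{bmatrix}: r\in\mathbb{Z}_{\ge1}, b\in\mathbb{R}_+\}$, $M(\mathcal{Z}_{\mathbb{R}_+})$ the free monoid on these symbols with words written $\begin{bmatrix} s_1,\dots,s_k\\ b_1,\dots,b_k\end{bmatrix}$ (empty word $1$), $\mathcal{H}(\mathcal{Z}_{\mathbb{R}_+})=\mathbb{Z}M(\mathcal{Z}_{\mathbb{R}_+})$. Let $X=\{x_0\}\sqcup\{x_b:b\in\mathbb{R}_+\}$ and on $\mathbb{Z}M(X)$ let $ш$ be the shuffle product: $1шw=w=wш1$, $(aw')ш(bw'')=a(w'шbw'')+b(aw'шw'')$ for letters $a,b\in X$. Let $\rho$ be the linear bijection from $\mathbb{Z}\oplus\bigoplus_{b}\mathbb{Z}M(X)x_b$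 onto $\mathcal{H}(\mathcal{Z}_{\mathbb{R}_+})$ given by $x_0^{r_1-1}x_{b_1}\cdots x_0^{r_k-1}x_{b_k}\mapsto\begin{bmatrix} r_1,\dots,r_k\\ b_1,\dots,b_k\end{bmatrix}$, $1\mapsto1$, and define $\alpha\diamond\beta=\rho(\rho^{-1}(\alpha)ш\rho^{-1}(\beta))$. *)

theory Defs
  imports Main "HOL.Real"
begin

text \<open>Letters of X: None = x_0, Some b = x_b.\<close>
type_synonym xletter = "real option"
type_synonym xword = "xletter list"

text \<open>Words of the free monoid on Z_{R+}: lists of pairs (r, b).\<close>
type_synonym zword = "(nat \<times> real) list"

definition valid_zword :: "zword \<Rightarrow> bool" where
  "valid_zword w \<longleftrightarrow> (\<forall>(r, b) \<in> set w. r \<ge> 1 \<and> b > 0)"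

text \<open>Shuffle product on Z M(X), as the list of all shuffles with multiplicity.\<close>
fun shuf :: "xword \<Rightarrow> xword \<Rightarrow> xword list" where
  "shuf [] v = [v]"
| "shuf u [] = [u]"
| "shuf (a # u) (b # v) = map (Cons a) (shuf u (b # v)) @ map (Cons b) (shuf (a # u) v)"

text \<open>rho: x_0^{r1-1} x_{b1} ... x_0^{rk-1} x_{bk} \<mapsto> [r1..rk; b1..bk].\<close>
fun rho_aux :: "nat \<Rightarrow> xword \<Rightarrow> zword" where
  "rho_aux n [] = []"
| "rho_aux n (None # w) = rho_aux (Suc n) w"
| "rho_aux n (Some b # w) = (Suc n, b) # rho_aux 0 w"

definition rho :: "xword \<Rightarrow> zword" where
  "rho w = rho_aux 0 w"

fun rho_inv :: "zword \<Rightarrow> xword" where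
  "rho_inv [] = []"
| "rho_inv ((r, b) # w) = replicate (r - 1) None @ [Some b] @ rho_inv w"

text \<open>Elements of R \<otimes> H(Z_{R+}): finitely supported real-valued functions on words.\<close>
definition supp :: "(zword \<Rightarrow> real) \<Rightarrow> zword set" where
  "supp \<alpha> = {w. \<alpha> w \<noteq> 0}"

definition unit_elem :: "zword \<Rightarrow> real" where
  "unit_elem w = (if w = [] then 1 else 0)"

definition diamond :: "(zword \<Rightarrow> real) \<Rightarrow> (zword \<Rightarrow> real) \<Rightarrow> (zword \<Rightarrow> real)" where
  "diamond \<alpha> \<beta> w = (\<Sum>u\<in>supp \<alpha>. \<Sum>v\<in>supp \<beta>.
      \<alpha> u * \<beta> v * real (count_list (map rho (shuf (rho_inv u) (rho_inv v))) w))"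

text \<open>f(s_1..s_k; b_1..b_k) = 1 / ((b_1+...+b_k)^{s_1} ... b_k^{s_k}).\<close>
fun fval :: "zword \<Rightarrow> real" where
  "fval [] = 1"
| "fval ((s, b) # w) = fval w / (b + sum_list (map snd w)) ^ s"

definition Theta :: "(zword \<Rightarrow> real) \<Rightarrow> real" where
  "Theta \<alpha> = (\<Sum>w\<in>supp \<alpha>. \<alpha> w * fval w)"

end

theory Submission
  imports Defs
begin

text \<open>Pull everything back along \<open>rho\<close> to words over \<open>X\<close>, giving \<open>x\<^sub>b\<close> weight \<open>b\<close> and \<open>x\<^sub>0\<close>
weight \<open>0\<close>. There \<open>f\<close> becomes \<open>F(a w) = F(w) / (wt a + wt w)\<close>, and it suffices that \<open>F\<close> is a
shuffle character. Splitting the shuffles of \<open>a u\<close> and \<open>b v\<close> by their first letter, induction gives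
\<open>(F(u) F(b v) + F(a u) F(v)) / (wt(a u) + wt(b v))\<close>, and \<open>F(u) = wt(a u) F(a u)\<close>,
\<open>F(v) = wt(b v) F(b v)\<close> collapse this to \<open>F(a u) F(b v)\<close>; positivity of the suffix weights keeps
all denominators nonzero.\<close>

definition letter_weight :: "xletter \<Rightarrow> real" where
  "letter_weight a = (case a of None \<Rightarrow> 0 | Some b \<Rightarrow> b)"

definition word_weight :: "xword \<Rightarrow> real" where
  "word_weight w = sum_list (map letter_weight w)"

fun fval_word :: "xword \<Rightarrow> real" where
  "fval_word [] = 1"
| "fval_word (a # w) = fval_word w / (letter_weight a + word_weight w)"

fun positive_suffixes :: "xword \<Rightarrow> bool" where
  "positive_suffixes [] = True"
| "positive_suffixes (a # w) \<longleftrightarrow> word_weight (a # w) > 0 \<and> positive_suffixes w"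

lemma letter_weight_simps [simp]:
  "letter_weight None = 0" "letter_weight (Some b) = b"
  by (simp_all add: letter_weight_def)

lemma word_weight_simps [simp]:
  "word_weight [] = 0"
  "word_weight (a # w) = letter_weight a + word_weight w"
  "word_weight (u @ v) = word_weight u + word_weight v"
  "word_weight (replicate n None) = 0"
  by (simp_all add: word_weight_def sum_list_replicate)

lemma length_shuf: "w \<in> set (shuf u v) \<Longrightarrow> length w = length u + length v"
  by (induction u v arbitrary: w rule: shuf.induct) auto

lemma word_weight_shuf: "w \<in> set (shuf u v) \<Longrightarrow> word_weight w = word_weight u + word_weight v"
  by (induction u v arbitrary: w rule: shuf.induct) auto

lemma last_shuf:
  assumes "w \<in> set (shuf u v)" "u = [] \<or> P (last u)" "v = [] \<or> P (last v)"
  shows "w = [] \<or> P (last w)"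
  using assms
proof (induction u v arbitrary: w rule: shuf.induct)
  case (3 a u b v)
  from "3.prems"(1) consider
      w' where "w = a # w'" "w' \<in> set (shuf u (b # v))"
    | w' where "w = b # w'" "w' \<in> set (shuf (a # u) v)"
    by auto
  then show ?case
  proof cases
    case 1
    then have "w' \<noteq> []" by (auto dest: length_shuf)
    with 1 "3.IH"(1) "3.prems" show ?thesis by (cases u) auto
  next
    case 2
    then have "w' \<noteq> []" by (auto dest: length_shuf)
    with 2 "3.IH"(2) "3.prems" show ?thesis by (cases v) auto
  qed
qed auto

lemma positive_suffixes_word_weight:
  "positive_suffixes w \<Longrightarrow> word_weight w \<ge> 0"
  by (cases w) auto

lemma sum_list_shuf_fval_word:
  assumes "positive_suffixes u" "positive_suffixes v"
  shows "(\<Sum>w\<leftarrow>shuf u v. fval_word w) = fval_word u * fval_word v"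
  using assms
proof (induction u v rule: shuf.induct)
  case (3 a u b v)
  let ?X = "word_weight (a # u) + word_weight (b # v)"
  have pos_au: "word_weight (a # u) > 0" and pos_bv: "word_weight (b # v) > 0"
    using "3.prems" by auto
  have prepend: "(\<Sum>w\<leftarrow>ws. fval_word (c # w)) = (\<Sum>w\<leftarrow>ws. fval_word w) / ?X"
    if "\<forall>w\<in>set ws. letter_weight c + word_weight w = ?X" for c ws
    using that by (induction ws) (auto simp: add_divide_distrib)
  have "(\<Sum>w\<leftarrow>shuf (a # u) (b # v). fval_word w)
      = ((\<Sum>w\<leftarrow>shuf u (b # v). fval_word w) + (\<Sum>w\<leftarrow>shuf (a # u) v. fval_word w)) / ?X"
    by (simp add: o_def add_divide_distrib prepend word_weight_shuf del: fval_word.simps)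
  also have "\<dots> = (fval_word u * fval_word (b # v) + fval_word (a # u) * fval_word v) / ?X"
    using "3.IH" "3.prems" by simp
  also have "fval_word u = fval_word (a # u) * word_weight (a # u)"
    using pos_au by simp
  also have "fval_word v = fval_word (b # v) * word_weight (b # v)"
    using pos_bv by simp
  also have "(fval_word (a # u) * word_weight (a # u) * fval_word (b # v)
        + fval_word (a # u) * (fval_word (b # v) * word_weight (b # v))) / ?X
      = fval_word (a # u) * fval_word (b # v)"
    using pos_au pos_bv by (simp add: field_simps del: fval_word.simps word_weight_simps)
  finally show ?case .
qed auto

lemma fval_word_replicate_None:
  "fval_word (replicate n None @ v) = fval_word v / word_weight v ^ n"
  by (induction n) (auto simp: field_simps)

lemma sum_list_snd_rho_aux: "sum_list (map snd (rho_aux n w)) = word_weight w"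
  by (induction n w rule: rho_aux.induct) auto

lemma fval_rho_aux:
  assumes "w = [] \<or> last w \<noteq> None" "w = [] \<longrightarrow> n = 0"
  shows "fval (rho_aux n w) = fval_word (replicate n None @ w)"
  using assms
proof (induction n w rule: rho_aux.induct)
  case (2 n w)
  then have "w \<noteq> []" by auto
  with 2 show ?case by (simp add: replicate_app_Cons_same)
next
  case (3 n b w)
  then have "fval (rho_aux 0 w) = fval_word w"
    by (cases w rule: rev_cases) auto
  then show ?case
    by (simp add: fval_word_replicate_None sum_list_snd_rho_aux field_simps)
qed simp

text \<open>\<open>rho\<close> silently drops a trailing block of \<open>x\<^sub>0\<close> letters, whence the hypothesis.\<close>

lemma fval_rho: "w = [] \<or> last w \<noteq> None \<Longrightarrow> fval (rho w) = fval_word w"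
  using fval_rho_aux[of w 0] by (simp add: rho_def)

lemma rho_aux_replicate_None: "rho_aux n (replicate m None @ w) = rho_aux (n + m) w"
  by (induction m arbitrary: n) auto

lemma rho_rho_inv: "valid_zword z \<Longrightarrow> rho (rho_inv z) = z"
  by (induction z rule: rho_inv.induct) (auto simp: valid_zword_def rho_def rho_aux_replicate_None)

lemma last_rho_inv: "rho_inv z = [] \<or> last (rho_inv z) \<noteq> None"
  by (induction z rule: rho_inv.induct) auto

lemma positive_suffixes_replicate_None:
  assumes "b > 0" "positive_suffixes w"
  shows "positive_suffixes (replicate n None @ Some b # w)"
proof -
  have "word_weight w \<ge> 0"
    using assms(2) by (rule positive_suffixes_word_weight)
  then show ?thesis
    using assms by (induction n) auto
qed

lemma positive_suffixes_rho_inv: "valid_zword z \<Longrightarrow> positive_suffixes (rho_inv z)"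
  by (induction z rule: rho_inv.induct)
    (auto simp: valid_zword_def intro: positive_suffixes_replicate_None)

lemma sum_list_shuf_rho_inv:
  assumes "valid_zword u" "valid_zword v"
  shows "(\<Sum>w\<leftarrow>shuf (rho_inv u) (rho_inv v). fval (rho w)) = fval u * fval v"
proof -
  have "(\<Sum>w\<leftarrow>shuf (rho_inv u) (rho_inv v). fval (rho w))
      = (\<Sum>w\<leftarrow>shuf (rho_inv u) (rho_inv v). fval_word w)"
    using last_shuf[where P = "\<lambda>a. a \<noteq> None", OF _ last_rho_inv last_rho_inv]
    by (simp add: o_def fval_rho cong: map_cong)
  also have "\<dots> = fval_word (rho_inv u) * fval_word (rho_inv v)"
    using assms by (simp add: sum_list_shuf_fval_word positive_suffixes_rho_inv)
  also have "\<dots> = fval u * fval v"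
    using fval_rho[OF last_rho_inv, of u] fval_rho[OF last_rho_inv, of v]
    by (simp add: assms rho_rho_inv)
  finally show ?thesis .
qed

lemma Theta_eq_sum_superset:
  "finite S \<Longrightarrow> supp \<alpha> \<subseteq> S \<Longrightarrow> Theta \<alpha> = (\<Sum>w\<in>S. \<alpha> w * fval w)"
  unfolding Theta_def by (rule sum.mono_neutral_left) (auto simp: supp_def)

lemma Theta_unit_elem: "Theta unit_elem = 1"
proof -
  have "supp unit_elem = {[]}"
    by (auto simp: supp_def unit_elem_def)
  then show ?thesis
    by (simp add: Theta_def unit_elem_def)
qed

lemma Theta_add:
  assumes "finite (supp \<alpha>)" "finite (supp \<beta>)"
  shows "Theta (\<lambda>w. \<alpha> w + \<beta> w) = Theta \<alpha> + Theta \<beta>"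
proof -
  let ?S = "supp \<alpha> \<union> supp \<beta>"
  have "supp (\<lambda>w. \<alpha> w + \<beta> w) \<subseteq> ?S" "supp \<alpha> \<subseteq> ?S" "supp \<beta> \<subseteq> ?S"
    by (auto simp: supp_def)
  with assms show ?thesis
    by (simp add: Theta_eq_sum_superset[of ?S] sum.distrib distrib_right)
qed

lemma Theta_scale: "finite (supp \<alpha>) \<Longrightarrow> Theta (\<lambda>w. c * \<alpha> w) = c * Theta \<alpha>"
  by (subst Theta_eq_sum_superset[of "supp \<alpha>"])
    (auto simp: supp_def Theta_def sum_distrib_left mult.assoc)

lemma sum_list_map_eq_sum_of_count:
  fixes f :: "'a \<Rightarrow> 'b :: comm_semiring_1"
  assumes "finite X" "set xs \<subseteq> X"
  shows "(\<Sum>x\<leftarrow>xs. f x) = (\<Sum>x\<in>X. of_nat (count_list xs x) * f x)"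
  using assms(2)
proof (induction xs)
  case (Cons y xs)
  have "(\<Sum>x\<in>X. of_nat (count_list (y # xs) x) * f x)
      = (\<Sum>x\<in>X. if y = x then f x else 0) + (\<Sum>x\<in>X. of_nat (count_list xs x) * f x)"
    by (subst sum.distrib[symmetric], rule sum.cong) (auto simp: distrib_right)
  with Cons assms(1) show ?case
    by (simp add: sum.delta)
qed simp

lemma Theta_diamond:
  assumes fin: "finite (supp \<alpha>)" "finite (supp \<beta>)"
    and valid: "\<forall>w\<in>supp \<alpha>. valid_zword w" "\<forall>w\<in>supp \<beta>. valid_zword w"
  shows "Theta (diamond \<alpha> \<beta>) = Theta \<alpha> * Theta \<beta>"
proof -
  define L where "L u v = map rho (shuf (rho_inv u) (rho_inv v))" for u v
  define S where "S = (\<Union>u\<in>supp \<alpha>. \<Union>v\<in>supp \<beta>. set (L u v))"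
  have "finite S"
    using fin by (simp add: S_def)
  have L_in_S: "set (L u v) \<subseteq> S" if "u \<in> supp \<alpha>" "v \<in> supp \<beta>" for u v
    using that by (auto simp: S_def)
  have "supp (diamond \<alpha> \<beta>) \<subseteq> S"
  proof
    fix w
    assume "w \<in> supp (diamond \<alpha> \<beta>)"
    then have "(\<Sum>u\<in>supp \<alpha>. \<Sum>v\<in>supp \<beta>. \<alpha> u * \<beta> v * real (count_list (L u v) w)) \<noteq> 0"
      by (simp add: supp_def diamond_def L_def)
    then obtain u where "u \<in> supp \<alpha>"
      "(\<Sum>v\<in>supp \<beta>. \<alpha> u * \<beta> v * real (count_list (L u v) w)) \<noteq> 0"
      by (rule sum.not_neutral_contains_not_neutral)
    moreover from this(2) obtain v where "v \<in> supp \<beta>"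
      "\<alpha> u * \<beta> v * real (count_list (L u v) w) \<noteq> 0"
      by (rule sum.not_neutral_contains_not_neutral)
    ultimately show "w \<in> S"
      using L_in_S by (fastforce simp: count_list_0_iff)
  qed
  with \<open>finite S\<close> have "Theta (diamond \<alpha> \<beta>) = (\<Sum>w\<in>S. diamond \<alpha> \<beta> w * fval w)"
    by (rule Theta_eq_sum_superset)
  also have "\<dots> = (\<Sum>u\<in>supp \<alpha>. \<Sum>v\<in>supp \<beta>. \<alpha> u * \<beta> v *
      (\<Sum>w\<in>S. real (count_list (L u v) w) * fval w))"
    by (simp add: diamond_def L_def sum_distrib_right sum_distrib_left mult.assoc sum.swap[of _ S])
  also have "\<dots> = (\<Sum>u\<in>supp \<alpha>. \<Sum>v\<in>supp \<beta>. \<alpha> u * \<beta> v * (fval u * fval v))"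
  proof (intro sum.cong refl arg_cong[where f = "(*) _"])
    fix u v
    assume uv: "u \<in> supp \<alpha>" "v \<in> supp \<beta>"
    have "(\<Sum>w\<in>S. real (count_list (L u v) w) * fval w) = (\<Sum>w\<leftarrow>L u v. fval w)"
      by (simp add: sum_list_map_eq_sum_of_count[OF \<open>finite S\<close> L_in_S[OF uv], where f = fval])
    also have "\<dots> = fval u * fval v"
      using uv valid by (simp add: L_def o_def sum_list_shuf_rho_inv)
    finally show "(\<Sum>w\<in>S. real (count_list (L u v) w) * fval w) = fval u * fval v" .
  qed
  also have "\<dots> = Theta \<alpha> * Theta \<beta>"
    by (simp add: Theta_def sum_product algebra_simps)
  finally show ?thesis .
qed

theorem corollary2p5:
  shows "Theta unit_elem = 1 \<and>
    (\<forall>\<alpha> \<beta>. finite (supp \<alpha>) \<and> finite (supp \<beta>) \<and>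
           (\<forall>w\<in>supp \<alpha>. valid_zword w) \<and> (\<forall>w\<in>supp \<beta>. valid_zword w) \<longrightarrow>
           Theta (diamond \<alpha> \<beta>) = Theta \<alpha> * Theta \<beta>) \<and>
    (\<forall>\<alpha> \<beta>. finite (supp \<alpha>) \<and> finite (supp \<beta>) \<longrightarrow>
           Theta (\<lambda>w. \<alpha> w + \<beta> w) = Theta \<alpha> + Theta \<beta>) \<and>
    (\<forall>\<alpha> c. finite (supp \<alpha>) \<longrightarrow> Theta (\<lambda>w. c * \<alpha> w) = c * Theta \<alpha>)"
  by (simp add: Theta_unit_elem Theta_diamond Theta_add Theta_scale)

end
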